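(* Let $Y$ be a real Banach space, $X$ a closed subspace of $Y$ and $Q:Y\to Y/X$ the quotient map. Let $(B_n)_{n\ge1}$ be a uniformly bounded sequence of bounded operators on $Y$ such that $\lim_{n\to\infty}\|QB_n|_X\|_{X\to Y/X}=0$ and $\limsup_{n\to\infty}\|B_n|_X\|_{X\to Y}\le1$. Then for every $\delta>0$ there is an infinite subset $\mathbb M\subseteq\mathbb N$ such that for all $k\ge1$ and all $n_1<n_2<\dots<n_k$ in $\mathbb M$, $$\|(B_{n_1}B_{n_2}\cdots B_{n_k})|_X\|_{X\to Y}<1+\delta.$$
   Context: For an operator $B$ on $Y$, $\|B|_X\|_{X\to Y}$ denotes the norm of its restriction to $X$. *)

theory Defs
  imports "HOL-Analysis.Analysis" "HOL-Library.Liminf_Limsup"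
begin

definition restr_norm :: "('a::real_normed_vector \<Rightarrow>\<^sub>L 'a) \<Rightarrow> 'a set \<Rightarrow> real" where
  "restr_norm B X = (SUP x\<in>{x\<in>X. norm x \<le> 1}. norm (blinfun_apply B x))"

text \<open>Norm of Q B restricted to X, as a map X to Y/X, where Q is the quotient map;
  the quotient norm of Q y is the distance from y to X.\<close>
definition quot_restr_norm :: "('a::real_normed_vector \<Rightarrow>\<^sub>L 'a) \<Rightarrow> 'a set \<Rightarrow> real" where
  "quot_restr_norm B X = (SUP x\<in>{x\<in>X. norm x \<le> 1}. infdist (blinfun_apply B x) X)"

definition op_prod :: "(nat \<Rightarrow> ('a::real_normed_vector \<Rightarrow>\<^sub>L 'a)) \<Rightarrow> nat list \<Rightarrow> ('a \<Rightarrow>\<^sub>L 'a)" where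
  "op_prod B ns = foldr (\<lambda>n A. B n o\<^sub>L A) ns id_blinfun"

end

theory Submission
  imports Defs
begin

(* Choose a subsequence g of indices such that B (g j) maps the
   unit ball of X to within tolerance s_j / K^j of X (K a uniform bound, K >= 1) and
   has restricted norm at most 1 + s_j.  For x in X, the operator applied first in a
   product B_{n_1} ... B_{n_k}, namely B_{n_k} with n_k = g j, sends x to y + e with
   y in X, |y| <= (1 + 2 s_j)|x| and |e| <= (s_j / K^j)|x|.  The remaining product has
   at most j factors, so it maps e to a vector of norm <= s_j |x|, while y is handled
   by induction.  This gives |product x| <= c_i |x| for a "budget" sequence c with
   c_j (1 + 2 s_j) + s_j <= c_(j+1); the choice c_j = 1 + delta - delta / 2^j and
   s_j = delta / (2^(j+1) (3 + 2 delta)) works and stays below 1 + delta. *)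

lemma op_prod_append: "op_prod B (xs @ ys) = op_prod B xs o\<^sub>L op_prod B ys"
  by (induction xs) (auto simp: op_prod_def intro!: blinfun_eqI)

lemma op_prod_norm_le:
  assumes "\<And>n. norm (B n) \<le> K"
  shows "norm (op_prod B ns) \<le> K ^ length ns"
proof (induction ns)
  case Nil
  show ?case using norm_blinfun_id_le by (simp add: op_prod_def)
next
  case (Cons n ns)
  have "0 \<le> K" using order_trans[OF norm_ge_zero assms] .
  have "norm (op_prod B (n # ns)) \<le> norm (B n) * norm (op_prod B ns)"
    by (simp add: op_prod_def norm_blinfun_compose)
  also have "\<dots> \<le> K * K ^ length ns"
    using Cons assms[of n] \<open>0 \<le> K\<close> by (intro mult_mono) auto
  finally show ?case by simp
qed

lemma length_le_if_sorted_in_image: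
  fixes ns :: "'b::linorder list"
  assumes "sorted_wrt (<) ns" "set ns \<subseteq> f ` {..<j}"
  shows "length ns \<le> j"
proof -
  have "length ns = card (set ns)"
    using assms(1) by (simp add: strict_sorted_iff distinct_card)
  also have "\<dots> \<le> card (f ` {..<j})" using assms(2) by (intro card_mono) auto
  also have "\<dots> \<le> j" using card_image_le[of "{..<j}" f] by simp
  finally show ?thesis .
qed

lemma norm_blinfun_unit_ball: "norm u \<le> 1 \<Longrightarrow> norm (blinfun_apply T u) \<le> norm T"
  using norm_blinfun[of T u] mult_left_le[of "norm u" "norm T"] by simp

lemma norm_le_restr_norm_unit:
  fixes T :: "'a::real_normed_vector \<Rightarrow>\<^sub>L 'a"
  assumes "u \<in> X" "norm u \<le> 1"
  shows "norm (T u) \<le> restr_norm T X"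
  unfolding restr_norm_def
proof (rule cSUP_upper)
  show "bdd_above ((\<lambda>v. norm (T v)) ` {v \<in> X. norm v \<le> 1})"
    by (intro bdd_aboveI2[where M = "norm T"]) (auto intro: norm_blinfun_unit_ball)
qed (use assms in auto)

lemma infdist_le_quot_restr_norm_unit:
  fixes T :: "'a::real_normed_vector \<Rightarrow>\<^sub>L 'a"
  assumes "subspace X" "u \<in> X" "norm u \<le> 1"
  shows "infdist (T u) X \<le> quot_restr_norm T X"
  unfolding quot_restr_norm_def
proof (rule cSUP_upper)
  have "infdist (T v) X \<le> norm T" if "norm v \<le> 1" for v
    by (rule infdist_le2[OF subspace_0[OF assms(1)]]) (simp add: norm_blinfun_unit_ball that)
  then show "bdd_above ((\<lambda>v. infdist (T v) X) ` {v \<in> X. norm v \<le> 1})"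
    by (intro bdd_aboveI2[where M = "norm T"]) auto
qed (use assms in auto)

text \<open>By homogeneity, the restricted norm bounds T on all of X.\<close>
lemma norm_le_restr_norm:
  fixes T :: "'a::real_normed_vector \<Rightarrow>\<^sub>L 'a"
  assumes "subspace X" "x \<in> X"
  shows "norm (T x) \<le> restr_norm T X * norm x"
proof (cases "x = 0")
  case False
  define u where "u = x /\<^sub>R norm x"
  have "u \<in> X" "norm u \<le> 1" using assms False by (auto simp: u_def subspace_scale)
  then have "norm (T u) \<le> restr_norm T X" by (rule norm_le_restr_norm_unit)
  moreover have "norm (T x) = norm x * norm (T u)"
    using False by (simp add: u_def blinfun.scaleR_right)
  ultimately show ?thesis by (simp add: mult.commute mult_left_mono)
qed simp

lemma restr_norm_le:
  fixes T :: "'a::real_normed_vector \<Rightarrow>\<^sub>L 'a"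
  assumes "subspace X" "0 \<le> c" "\<And>x. x \<in> X \<Longrightarrow> norm (T x) \<le> c * norm x"
  shows "restr_norm T X \<le> c"
  unfolding restr_norm_def
proof (rule cSUP_least)
  show "{x \<in> X. norm x \<le> 1} \<noteq> {}" using subspace_0[OF assms(1)] by auto
next
  fix x assume "x \<in> {x \<in> X. norm x \<le> 1}"
  then show "norm (T x) \<le> c"
    using assms(3)[of x] mult_left_le[of "norm x" c] assms(2) by auto
qed

lemma infdist_lessE:
  assumes "A \<noteq> {}" "infdist x A < e"
  obtains a where "a \<in> A" "dist x a < e"
  using assms by (auto simp: infdist_notempty cINF_less_iff intro: bdd_belowI2[where m = 0])

lemma approx_in_subspace:
  fixes T :: "'a::real_normed_vector \<Rightarrow>\<^sub>L 'a"
  assumes X: "subspace X" and x: "x \<in> X" and q: "quot_restr_norm T X < \<epsilon>"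
  obtains y where "y \<in> X" "norm (T x - y) \<le> \<epsilon> * norm x"
    "norm y \<le> (restr_norm T X + \<epsilon>) * norm x"
proof -
  have "\<exists>y\<in>X. norm (T x - y) \<le> \<epsilon> * norm x"
  proof (cases "x = 0")
    case True
    then show ?thesis using subspace_0[OF X] by auto
  next
    case False
    define u where "u = x /\<^sub>R norm x"
    have "u \<in> X" "norm u \<le> 1" using X x False by (auto simp: u_def subspace_scale)
    then have close: "infdist (T u) X < \<epsilon>"
      using infdist_le_quot_restr_norm_unit[OF X] q by (meson order_le_less_trans)
    then obtain z where z: "z \<in> X" "dist (T u) z < \<epsilon>"
      using infdist_lessE[OF _ close] subspace_0[OF X] by blast
    have "T x - norm x *\<^sub>R z = norm x *\<^sub>R (T u - z)"
      using False by (simp add: u_def blinfun.scaleR_right scaleR_diff_right)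
    then have "norm (T x - norm x *\<^sub>R z) = norm x * dist (T u) z" by (simp add: dist_norm)
    also have "\<dots> \<le> \<epsilon> * norm x"
      using z(2) by (metis less_imp_le mult.commute mult_left_mono norm_ge_zero)
    finally show ?thesis
      using X z(1) by (intro bexI[of _ "norm x *\<^sub>R z"]) (auto simp: subspace_scale)
  qed
  then obtain y where y: "y \<in> X" "norm (T x - y) \<le> \<epsilon> * norm x" by blast
  have "norm y \<le> norm (T x) + norm (T x - y)"
    using norm_triangle_sub[of y "T x"] by (simp add: norm_minus_commute)
  also have "\<dots> \<le> (restr_norm T X + \<epsilon>) * norm x"
    using norm_le_restr_norm[OF X x, of T] y(2) by (simp add: distrib_right)
  finally show ?thesis by (rule that[OF y])
qed

text \<open>The admissible growth c_j after the first j selected operators, and the tolerance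
  s_j allowed for the j-th selected operator.\<close>
definition budget :: "real \<Rightarrow> nat \<Rightarrow> real" where
  "budget \<delta> j = 1 + \<delta> - \<delta> / 2 ^ j"

definition tolerance :: "real \<Rightarrow> nat \<Rightarrow> real" where
  "tolerance \<delta> j = \<delta> / (2 ^ (j + 1) * (3 + 2 * \<delta>))"

lemma tolerance_pos: "0 < \<delta> \<Longrightarrow> 0 < tolerance \<delta> j"
  by (simp add: tolerance_def)

lemma budget_bounds:
  assumes "0 < \<delta>"
  shows "1 \<le> budget \<delta> j" "budget \<delta> j < 1 + \<delta>"
proof -
  have "\<delta> / 2 ^ j \<le> \<delta> / 1" using assms by (intro divide_left_mono) auto
  then show "1 \<le> budget \<delta> j" by (simp add: budget_def)
  show "budget \<delta> j < 1 + \<delta>" using assms by (simp add: budget_def)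
qed

lemma budget_mono: "0 < \<delta> \<Longrightarrow> mono (budget \<delta>)"
  by (auto intro!: monoI divide_left_mono power_increasing simp: budget_def)

lemma budget_step:
  assumes "0 < \<delta>"
  shows "budget \<delta> j * (1 + 2 * tolerance \<delta> j) + tolerance \<delta> j \<le> budget \<delta> (Suc j)"
proof -
  define v where "v = \<delta> / 2 ^ (j + 1)"
  define u where "u = tolerance \<delta> j"
  have v: "0 \<le> v" and u: "0 \<le> u" and uv: "u * (3 + 2 * \<delta>) = v"
    using assms by (simp_all add: v_def u_def tolerance_def)
  have c: "budget \<delta> j = 1 + \<delta> - 2 * v" "budget \<delta> (Suc j) = 1 + \<delta> - v"
    by (simp_all add: budget_def v_def)
  have "2 * u * (1 + \<delta> - 2 * v) \<le> 2 * u * (1 + \<delta>)" using u v by (intro mult_left_mono) auto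
  then show ?thesis unfolding c u_def[symmetric] using uv by (simp add: algebra_simps)
qed

lemma strict_mono_choice:
  fixes P :: "nat \<Rightarrow> nat \<Rightarrow> bool"
  assumes "\<And>j. eventually (P j) sequentially"
  obtains g where "strict_mono g" "\<And>j. P j (g j)"
proof -
  have beyond: "\<exists>n>N. P j n" for j N
  proof -
    obtain N0 where "\<forall>n\<ge>N0. P j n" using assms[of j] by (auto simp: eventually_sequentially)
    then show ?thesis by (intro exI[of _ "max N0 (Suc N)"]) auto
  qed
  obtain g where "\<forall>j. P j (g j) \<and> g j < g (Suc j)"
    using dependent_nat_choice[of P "\<lambda>_ m n. m < n"] beyond by blast
  then show ?thesis using that by (auto simp: strict_mono_Suc_iff)
qed

lemma eventually_nearly_invariant:
  assumes "(\<lambda>n. quot_restr_norm (B n) X) \<longlonglongrightarrow> 0"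
    and "limsup (\<lambda>n. ereal (restr_norm (B n) X)) \<le> 1"
    and "0 < \<epsilon>" "0 < K"
  shows "eventually (\<lambda>n. K * quot_restr_norm (B n) X < \<epsilon> \<and> restr_norm (B n) X \<le> 1 + \<epsilon>)
           sequentially"
proof -
  have "eventually (\<lambda>n. quot_restr_norm (B n) X < \<epsilon> / K) sequentially"
    using assms by (intro order_tendstoD(2)[OF assms(1)]) simp
  moreover have "limsup (\<lambda>n. ereal (restr_norm (B n) X)) < ereal (1 + \<epsilon>)"
    using assms(2,3) by (simp add: order_le_less_trans)
  then have "eventually (\<lambda>n. ereal (restr_norm (B n) X) < ereal (1 + \<epsilon>)) sequentially"
    by (rule Limsup_lessD)
  ultimately show ?thesis
    by eventually_elim (use assms(4) in \<open>auto simp: pos_less_divide_eq mult.commute\<close>)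
qed

lemma op_prod_restr_bound:
  fixes B :: "nat \<Rightarrow> ('a::real_normed_vector \<Rightarrow>\<^sub>L 'a)"
  assumes X: "subspace X"
    and K: "\<And>n. norm (B n) \<le> K" "1 \<le> K"
    and g: "strict_mono g"
    and s_pos: "\<And>j. 0 < s j"
    and quot: "\<And>j. K ^ j * quot_restr_norm (B (g j)) X < s j"
    and restr: "\<And>j. restr_norm (B (g j)) X \<le> 1 + s j"
    and c_ge: "\<And>j. 1 \<le> c j" and c_mono: "mono c"
    and c_step: "\<And>j. c j * (1 + 2 * s j) + s j \<le> c (Suc j)"
  shows "sorted_wrt (<) ns \<Longrightarrow> set ns \<subseteq> g ` {..<i} \<Longrightarrow> x \<in> X \<Longrightarrow>
           norm (op_prod B ns x) \<le> c i * norm x"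
proof (induction ns arbitrary: i x rule: rev_induct)
  case Nil
  show ?case using c_ge[of i] by (simp add: op_prod_def mult_le_cancel_right1)
next
  case (snoc m ns)
  obtain j where j: "j < i" "m = g j" using snoc.prems(2) by auto
  have ns_sorted: "sorted_wrt (<) ns" using snoc.prems(1) by (simp add: sorted_wrt_append)
  have ns_sub: "set ns \<subseteq> g ` {..<j}"
  proof
    fix n assume n: "n \<in> set ns"
    then obtain k where "n = g k" using snoc.prems(2) by auto
    moreover have "n < g j" using snoc.prems(1) n j(2) by (simp add: sorted_wrt_append)
    ultimately show "n \<in> g ` {..<j}" using g by (auto simp: strict_mono_less)
  qed
  have ns_norm: "norm (op_prod B ns) \<le> K ^ j"
    using op_prod_norm_le[of B K ns, OF K(1)] length_le_if_sorted_in_image[OF ns_sorted ns_sub]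
          power_increasing[OF _ K(2)] by (meson order_trans)
  have Kj: "0 < K ^ j" and "K \<noteq> 0" using K(2) by simp_all
  define \<gamma> where "\<gamma> = s j / K ^ j"
  have K_\<gamma>: "K ^ j * \<gamma> = s j" using \<open>K \<noteq> 0\<close> by (simp add: \<gamma>_def)
  have "quot_restr_norm (B m) X < \<gamma>"
    using quot[of j] Kj j(2) by (simp add: \<gamma>_def pos_less_divide_eq mult.commute)
  then obtain y where y: "y \<in> X" "norm (B m x - y) \<le> \<gamma> * norm x"
    "norm y \<le> (restr_norm (B m) X + \<gamma>) * norm x"
    using approx_in_subspace[OF X snoc.prems(3)] by blast
  have "1 \<le> K ^ j" using K(2) by simp
  then have "\<gamma> \<le> s j"
    using s_pos[of j] by (simp add: \<gamma>_def divide_le_eq mult_le_cancel_left1)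
  then have "restr_norm (B m) X + \<gamma> \<le> 1 + 2 * s j" using restr[of j] j(2) by simp
  then have y_norm: "norm y \<le> (1 + 2 * s j) * norm x"
    using y(3) by (meson order_trans mult_right_mono norm_ge_zero)
  have err_norm: "norm (op_prod B ns (B m x - y)) \<le> s j * norm x"
  proof -
    have "norm (op_prod B ns (B m x - y)) \<le> norm (op_prod B ns) * norm (B m x - y)"
      by (rule norm_blinfun)
    also have "\<dots> \<le> K ^ j * (\<gamma> * norm x)"
      using ns_norm y(2) Kj by (intro mult_mono) auto
    finally show ?thesis by (simp add: K_\<gamma> flip: mult.assoc)
  qed
  have split: "op_prod B (ns @ [m]) x = op_prod B ns y + op_prod B ns (B m x - y)"
    by (simp add: op_prod_append blinfun.diff_right) (simp add: op_prod_def)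
  have "norm (op_prod B (ns @ [m]) x)
      \<le> norm (op_prod B ns y) + norm (op_prod B ns (B m x - y))"
    unfolding split by (rule norm_triangle_ineq)
  also have "\<dots> \<le> c j * norm y + s j * norm x"
    using snoc.IH[OF ns_sorted ns_sub y(1)] err_norm by (rule add_mono)
  also have "\<dots> \<le> c j * ((1 + 2 * s j) * norm x) + s j * norm x"
    using y_norm c_ge[of j] by (intro add_right_mono mult_left_mono) auto
  also have "\<dots> = (c j * (1 + 2 * s j) + s j) * norm x" by (simp add: algebra_simps)
  also have "\<dots> \<le> c i * norm x"
    using c_step[of j] monoD[OF c_mono, of "Suc j" i] j(1) by (intro mult_right_mono) auto
  finally show ?case .
qed

lemma subset_image_lessThan_Max:
  assumes g: "strict_mono g" and A: "finite A" "A \<subseteq> range g"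
  shows "A \<subseteq> g ` {..<Suc (Max A)}"
proof
  fix n assume n: "n \<in> A"
  then obtain k where "n = g k" using A(2) by auto
  moreover have "n \<le> Max A" using A(1) n by simp
  ultimately show "n \<in> g ` {..<Suc (Max A)}" using seq_suble[OF g, of k] by auto
qed

lemma restr_norm_op_prod_less:
  fixes B :: "nat \<Rightarrow> ('a::real_normed_vector \<Rightarrow>\<^sub>L 'a)"
  assumes X: "subspace X" and K: "\<And>n. norm (B n) \<le> K" "1 \<le> K"
    and g: "strict_mono g" and \<delta>: "0 < \<delta>"
    and quot: "\<And>j. K ^ j * quot_restr_norm (B (g j)) X < tolerance \<delta> j"
    and restr: "\<And>j. restr_norm (B (g j)) X \<le> 1 + tolerance \<delta> j"
    and ns: "sorted_wrt (<) ns" "set ns \<subseteq> range g"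
  shows "restr_norm (op_prod B ns) X < 1 + \<delta>"
proof -
  define i where "i = Suc (Max (set ns))"
  have "set ns \<subseteq> g ` {..<i}"
    unfolding i_def using subset_image_lessThan_Max[OF g _ ns(2)] by simp
  note bound = op_prod_restr_bound[OF X K g tolerance_pos[OF \<delta>] quot restr
      budget_bounds(1)[OF \<delta>] budget_mono[OF \<delta>] budget_step[OF \<delta>] ns(1) this]
  have "restr_norm (op_prod B ns) X \<le> budget \<delta> i"
    using bound budget_bounds(1)[OF \<delta>, of i] by (intro restr_norm_le[OF X]) auto
  also have "\<dots> < 1 + \<delta>" using budget_bounds(2)[OF \<delta>] .
  finally show ?thesis .
qed

theorem lemma4p1:
  fixes X :: "'a::banach set" and B :: "nat \<Rightarrow> ('a \<Rightarrow>\<^sub>L 'a)"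
  assumes "subspace X" and "closed X"
    and "\<exists>C. \<forall>n. norm (B n) \<le> C"
    and "(\<lambda>n. quot_restr_norm (B n) X) \<longlonglongrightarrow> 0"
    and "limsup (\<lambda>n. ereal (restr_norm (B n) X)) \<le> 1"
  shows "\<forall>\<delta>>0. \<exists>M::nat set. infinite M \<and>
           (\<forall>ns. ns \<noteq> [] \<and> sorted_wrt (<) ns \<and> set ns \<subseteq> M \<longrightarrow>
                 restr_norm (op_prod B ns) X < 1 + \<delta>)"
proof (intro allI impI)
  fix \<delta> :: real assume \<delta>: "0 < \<delta>"
  obtain C where C: "\<forall>n. norm (B n) \<le> C" using assms(3) by blast
  define K where "K = max C 1"
  have K: "\<And>n. norm (B n) \<le> K" "1 \<le> K" using C by (auto simp: K_def intro: order_trans)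
  define good where "good j n \<longleftrightarrow> K ^ j * quot_restr_norm (B n) X < tolerance \<delta> j
      \<and> restr_norm (B n) X \<le> 1 + tolerance \<delta> j" for j n
  have "eventually (good j) sequentially" for j
    unfolding good_def using K(2)
    by (intro eventually_nearly_invariant[OF assms(4,5) tolerance_pos[OF \<delta>]]) simp
  then obtain g where g: "strict_mono g" and "\<And>j. good j (g j)"
    using strict_mono_choice[of good] by blast
  then have "restr_norm (op_prod B ns) X < 1 + \<delta>"
    if "sorted_wrt (<) ns" "set ns \<subseteq> range g" for ns
    using restr_norm_op_prod_less[OF assms(1) K g \<delta> _ _ that] by (simp add: good_def)
  moreover have "infinite (range g)" using g by (simp add: range_inj_infinite strict_mono_imp_inj_on)
  ultimately show "\<exists>M::nat set. infinite M \<and>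
      (\<forall>ns. ns \<noteq> [] \<and> sorted_wrt (<) ns \<and> set ns \<subseteq> M \<longrightarrow>
            restr_norm (op_prod B ns) X < 1 + \<delta>)"
    by blast
qed

end
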